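(* Let $A\in \mathbb{Z}^{m\times n}$, $b\in \mathbb{Z}^m$ and $p$ a prime. Then exactly one of the following holds: either $Ax=b$ has a $p$-adic solution $x$, or there exists $y\in \mathbb{R}^m$ such that $y^\top A$ is integral and $y^\top b$ is not a $p$-adic rational.
   Context: A $p$-adic rational is a number $a/p^k$ with $a,k\in\mathbb{Z}$, $k\ge0$; a vector is $p$-adic if all entries are $p$-adic rationals. *)

theory Defs
  imports "HOL-Analysis.Analysis"
begin

definition p_adic_rat :: "nat \<Rightarrow> real \<Rightarrow> bool" where
  "p_adic_rat p r \<longleftrightarrow> (\<exists>(a::int) (k::nat). r = of_int a / (real p) ^ k)"

definition p_adic_vec :: "nat \<Rightarrow> real ^ 'n \<Rightarrow> bool" where
  "p_adic_vec p x \<longleftrightarrow> (\<forall>i. p_adic_rat p (x $ i))"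

definition int_vec :: "real ^ 'n \<Rightarrow> bool" where
  "int_vec x \<longleftrightarrow> (\<forall>i. x $ i \<in> \<int>)"

definition int_mat :: "real ^ 'n ^ 'm \<Rightarrow> bool" where
  "int_mat A \<longleftrightarrow> (\<forall>i j. A $ i $ j \<in> \<int>)"

end

theory Submission
  imports Defs
begin

text \<open>
  Eliminate the rows of A one at a time. For a row a, let g be the gcd of its entries, written as
  a \<bullet> u = g with u integral, and put z = A u. If b_i / g is not a p-adic rational, then
  y = e_i / g is a certificate. Otherwise subtract (b_i / g) z from b and (a_j / g) z from the j-th
  column of A: this clears row i, keeps everything integral resp. p-adic, and a solution or a
  certificate of the reduced system lifts back to one of the original system.
\<close>

lemma sum_combination_eq_Gcd:
  fixes f :: "'a \<Rightarrow> int"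
  assumes "finite S"
  shows "\<exists>u. (\<Sum>j\<in>S. u j * f j) = Gcd (f ` S)"
  using assms
proof (induction S rule: finite_induct)
  case empty
  show ?case by simp
next
  case (insert j S)
  obtain u where u: "(\<Sum>k\<in>S. u k * f k) = Gcd (f ` S)"
    using insert.IH by blast
  obtain v w where vw: "v * f j + w * Gcd (f ` S) = gcd (f j) (Gcd (f ` S))"
    using bezout_int by blast
  have "(\<Sum>k\<in>S. (if k = j then v else w * u k) * f k) = (\<Sum>k\<in>S. w * (u k * f k))"
    using insert.hyps(2) by (auto intro!: sum.cong)
  also have "\<dots> = w * Gcd (f ` S)"
    by (simp add: u flip: sum_distrib_left)
  finally have "(\<Sum>k\<in>insert j S. (if k = j then v else w * u k) * f k) = Gcd (f ` insert j S)"
    using insert.hyps vw by simp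
  then show ?case by (intro exI[of _ "\<lambda>k. if k = j then v else w * u k"])
qed

lemma int_vec_Gcd_combination:
  fixes a :: "real^'n"
  assumes "int_vec a"
  obtains u g where "int_vec u" "a \<bullet> u = g" "int_vec ((1 / g) *\<^sub>R a)" "g = 0 \<longrightarrow> a = 0"
proof -
  define f where "f j = \<lfloor>a $ j\<rfloor>" for j
  have a: "a $ j = of_int (f j)" for j
    using assms unfolding int_vec_def f_def by (metis Ints_cases floor_of_int)
  define G where "G = Gcd (range f)"
  obtain v where v: "(\<Sum>j\<in>UNIV. v j * f j) = G"
    using sum_combination_eq_Gcd[of UNIV f] unfolding G_def by auto
  define u :: "real^'n" where "u = (\<chi> j. of_int (v j))"
  have "int_vec u" by (simp add: int_vec_def u_def)
  moreover have "a \<bullet> u = of_int G"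
    unfolding v[symmetric] by (simp add: inner_vec_def u_def a mult.commute)
  moreover have "int_vec ((1 / of_int G) *\<^sub>R a)"
  proof -
    have "of_int (f j) / of_int G \<in> (\<int> :: real set)" for j
    proof -
      have "G dvd f j"
        unfolding G_def by (rule Gcd_dvd) simp
      then obtain k where "f j = G * k" by (rule dvdE)
      then show ?thesis by (cases "G = 0") auto
    qed
    then show ?thesis by (simp add: int_vec_def a)
  qed
  moreover have "a = 0" if "of_int G = (0::real)"
    using that by (auto simp: G_def vec_eq_iff a)
  ultimately show ?thesis using that by blast
qed

definition outer_prod :: "real^'m \<Rightarrow> real^'n \<Rightarrow> real^'n^'m" where
  "outer_prod z q = (\<chi> i j. z $ i * q $ j)"

lemma outer_prod_matrix_vector_mult: "outer_prod z q *v x = (q \<bullet> x) *\<^sub>R z"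
  by (simp add: vec_eq_iff outer_prod_def matrix_vector_mult_def inner_vec_def sum_distrib_left
      algebra_simps)

lemma vector_matrix_mult_outer_prod: "y v* outer_prod z q = (y \<bullet> z) *\<^sub>R q"
  by (simp add: vec_eq_iff outer_prod_def vector_matrix_mult_def inner_vec_def sum_distrib_left
      algebra_simps)

lemma axis_vector_matrix_mult: "axis i c v* A = c *\<^sub>R A $ i"
  for A :: "real^'n^'m"
  by (simp add: vec_eq_iff vector_matrix_mult_def axis_def if_distrib[where f = "\<lambda>x. x * _"]
      cong: if_cong)

lemma matrix_vector_mult_nth: "(A *v u) $ i = A $ i \<bullet> u" for A :: "real^'n^'m"
  by (simp add: matrix_vector_mult_def inner_vec_def mult.commute)

lemma column_reduction_solution:
  fixes A :: "real^'n^'m"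
  assumes "(A - outer_prod (A *v u) q) *v x = b - s *\<^sub>R (A *v u)"
  shows "A *v (x + (s - q \<bullet> x) *\<^sub>R u) = b"
  using assms by (simp add: algebra_simps outer_prod_matrix_vector_mult)

lemma column_reduction_certificate:
  fixes A :: "real^'n^'m"
  assumes "y = y' - ((y' \<bullet> z) / g) *\<^sub>R axis i 1"
  shows "y v* A = y' v* (A - outer_prod z ((1 / g) *\<^sub>R A $ i))"
    and "y \<bullet> b = y' \<bullet> (b - (b $ i / g) *\<^sub>R z)"
  unfolding assms
  by (simp_all add: algebra_simps vector_matrix_mult_outer_prod axis_vector_matrix_mult inner_axis'
      scaleR_vector_matrix_assoc)

locale real_subring =
  fixes R :: "real set"
  assumes Ints_subset: "\<int> \<subseteq> R"
    and add_mem: "x \<in> R \<Longrightarrow> y \<in> R \<Longrightarrow> x + y \<in> R"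
    and mult_mem: "x \<in> R \<Longrightarrow> y \<in> R \<Longrightarrow> x * y \<in> R"
begin

lemma Ints_mem: "x \<in> \<int> \<Longrightarrow> x \<in> R"
  using Ints_subset by blast

lemma diff_mem: "x \<in> R \<Longrightarrow> y \<in> R \<Longrightarrow> x - y \<in> R"
  using add_mem[of x "-1 * y"] mult_mem[of "-1" y] Ints_mem[of "-1"] by simp

lemma sum_mem: "(\<And>i. i \<in> S \<Longrightarrow> f i \<in> R) \<Longrightarrow> sum f S \<in> R"
  by (induction S rule: infinite_finite_induct) (auto intro: add_mem Ints_mem)

lemma inner_mem:
  assumes "int_vec u" "\<forall>j. x $ j \<in> R"
  shows "u \<bullet> x \<in> R"
  using assms unfolding inner_vec_def int_vec_def by (intro sum_mem) (simp add: mult_mem Ints_mem)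

lemma certificate_excludes_solution:
  assumes "\<forall>j. x $ j \<in> R" "int_vec (y v* A)"
  shows "y \<bullet> (A *v x) \<in> R"
  using inner_mem[OF assms(2,1)] by (simp add: dot_lmul_matrix)

lemma certificate_from_row:
  assumes "R \<noteq> UNIV" "int_vec ((1 / g) *\<^sub>R A $ i)" "g = 0 \<longrightarrow> A $ i = 0"
    and "\<not> (b $ i / g \<in> R \<and> b $ i = b $ i / g * g)"
  shows "\<exists>y. int_vec (y v* A) \<and> y \<bullet> b \<notin> R"
proof (cases "g = 0")
  case True
  obtain r where "r \<notin> R" using assms(1) by blast
  moreover have "b $ i \<noteq> 0"
    using assms(4) True Ints_mem[of 0] by auto
  ultimately have "int_vec (axis i (r / b $ i) v* A) \<and> axis i (r / b $ i) \<bullet> b \<notin> R"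
    using assms(3) True by (simp add: axis_vector_matrix_mult inner_axis' int_vec_def)
  then show ?thesis by blast
next
  case False
  then have "int_vec (axis i (1 / g) v* A) \<and> axis i (1 / g) \<bullet> b \<notin> R"
    using assms(2,4) by (simp add: axis_vector_matrix_mult inner_axis')
  then show ?thesis by blast
qed

lemma solvable_or_certificate:
  fixes A :: "real^'n^'m"
  assumes "R \<noteq> UNIV" "finite I" "int_mat A" "\<forall>i. i \<notin> I \<longrightarrow> A $ i = 0"
    and "\<forall>i. b $ i \<in> R" "\<forall>i. i \<notin> I \<longrightarrow> b $ i = 0"
  shows "(\<exists>x. (\<forall>j. x $ j \<in> R) \<and> A *v x = b) \<or> (\<exists>y. int_vec (y v* A) \<and> y \<bullet> b \<notin> R)"
  using assms(2-)
proof (induction I arbitrary: A b rule: finite_induct)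
  case empty
  then have "A = 0" "b = 0" by (simp_all add: vec_eq_iff)
  then show ?case using Ints_mem[of 0] by (intro disjI1 exI[of _ 0]) simp
next
  case (insert i I)
  have "int_vec (A $ i)"
    using insert.prems(1) by (simp add: int_mat_def int_vec_def)
  then obtain u g where u: "int_vec u" "A $ i \<bullet> u = g"
    and q: "int_vec ((1 / g) *\<^sub>R A $ i)" and g: "g = 0 \<longrightarrow> A $ i = 0"
    by (rule int_vec_Gcd_combination)
  define z where "z = A *v u"
  \<comment> \<open>g = 0 only for a zero row; then q = 0 and s = 0 as 1 / 0 = 0, so the case split
    below asks in all cases whether b_i lies in g R\<close>
  define q where "q = (1 / g) *\<^sub>R A $ i"
  define s where "s = b $ i / g"
  show ?case
  proof (cases "s \<in> R \<and> b $ i = s * g")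
    case True
    define A' where "A' = A - outer_prod z q"
    define b' where "b' = b - s *\<^sub>R z"
    have z: "z $ i = g" "\<forall>k. z $ k \<in> \<int>" "\<forall>k. k \<notin> insert i I \<longrightarrow> z $ k = 0"
      using u insert.prems(1,2)
      by (auto simp: z_def matrix_vector_mult_nth int_mat_def int_vec_def inner_vec_def)
    have A'_i: "A' $ i = 0"
      using z(1) g by (cases "g = 0") (auto simp: A'_def q_def outer_prod_def vec_eq_iff)
    have "int_mat A'"
      using insert.prems(1) z(2) q by (simp add: A'_def outer_prod_def int_mat_def int_vec_def
          flip: q_def)
    moreover have "\<forall>k. k \<notin> I \<longrightarrow> A' $ k = 0"
    proof (intro allI impI)
      fix k assume "k \<notin> I"
      then show "A' $ k = 0"
        using A'_i insert.prems(2) z(3)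
        by (cases "k = i") (auto simp: A'_def outer_prod_def vec_eq_iff)
    qed
    moreover have "\<forall>k. b' $ k \<in> R"
      using insert.prems(3) z(2) True by (simp add: b'_def diff_mem mult_mem Ints_mem)
    moreover have "\<forall>k. k \<notin> I \<longrightarrow> b' $ k = 0"
    proof (intro allI impI)
      fix k assume "k \<notin> I"
      then show "b' $ k = 0"
        using insert.prems(4) z(1,3) True by (cases "k = i") (auto simp: b'_def mult.commute)
    qed
    ultimately have "(\<exists>x'. (\<forall>j. x' $ j \<in> R) \<and> A' *v x' = b') \<or>
        (\<exists>y'. int_vec (y' v* A') \<and> y' \<bullet> b' \<notin> R)"
      by (rule insert.IH)
    then show ?thesis
    proof (elim disjE exE conjE)
      fix x' assume x': "\<forall>j. x' $ j \<in> R" "A' *v x' = b'"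
      have "A *v (x' + (s - q \<bullet> x') *\<^sub>R u) = b"
        using x'(2) by (intro column_reduction_solution) (simp add: A'_def b'_def z_def)
      moreover have "\<forall>j. (x' + (s - q \<bullet> x') *\<^sub>R u) $ j \<in> R"
        using x'(1) True u(1) inner_mem[of q x'] q
        by (simp add: add_mem mult_mem diff_mem Ints_mem int_vec_def flip: q_def)
      ultimately show ?thesis by blast
    next
      fix y' assume y': "int_vec (y' v* A')" "y' \<bullet> b' \<notin> R"
      define y where "y = y' - ((y' \<bullet> z) / g) *\<^sub>R axis i 1"
      have "y v* A = y' v* A'" "y \<bullet> b = y' \<bullet> b'"
        unfolding A'_def b'_def q_def s_def by (fact column_reduction_certificate[OF y_def])+
      then show ?thesis using y' by metis
    qed
  next
    case False
    then show ?thesis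
      using certificate_from_row[OF assms(1) q g] by (simp add: s_def)
  qed
qed

end

lemma real_subring_p_adic_rat:
  assumes "0 < p"
  shows "real_subring {r. p_adic_rat p r}"
proof
  show "\<int> \<subseteq> {r. p_adic_rat p r}"
  proof
    fix r :: real assume "r \<in> \<int>"
    then obtain a where "r = of_int a" by (rule Ints_cases)
    then have "r = of_int a / real p ^ 0" by simp
    then show "r \<in> {r. p_adic_rat p r}" unfolding p_adic_rat_def by blast
  qed
next
  fix x y assume "x \<in> {r. p_adic_rat p r}" "y \<in> {r. p_adic_rat p r}"
  then obtain a k c l where x: "x = of_int a / real p ^ k" and y: "y = of_int c / real p ^ l"
    unfolding mem_Collect_eq p_adic_rat_def by blast
  have "x + y = of_int (a * int p ^ l + c * int p ^ k) / real p ^ (k + l)"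
    using assms by (simp add: x y field_simps power_add)
  moreover have "x * y = of_int (a * c) / real p ^ (k + l)"
    by (simp add: x y power_add)
  ultimately show "x + y \<in> {r. p_adic_rat p r}" "x * y \<in> {r. p_adic_rat p r}"
    unfolding p_adic_rat_def by blast+
qed

lemma p_adic_rat_Rats:
  assumes "p_adic_rat p r"
  shows "r \<in> \<rat>"
proof -
  obtain a k where "r = of_int a / real p ^ k"
    using assms unfolding p_adic_rat_def by blast
  then show ?thesis by (simp add: Rats_divide Rats_power)
qed

lemma p_adic_rats_ne_UNIV: "{r. p_adic_rat p r} \<noteq> UNIV"
proof
  assume "{r. p_adic_rat p r} = UNIV"
  moreover have "{r. p_adic_rat p r} \<subseteq> \<rat>"
    using p_adic_rat_Rats by blast
  ultimately have "(UNIV :: real set) \<subseteq> \<rat>" by simp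
  then have "countable (UNIV :: real set)"
    by (rule countable_subset) (rule countable_rat)
  with uncountable_UNIV_real show False by simp
qed

theorem lemma2p3:
  fixes A :: "real ^ 'n ^ 'm" and b :: "real ^ 'm" and p :: nat
  assumes "int_mat A" and "int_vec b" and "prime p"
  shows "(\<exists>x. p_adic_vec p x \<and> A *v x = b) \<longleftrightarrow>
         \<not> (\<exists>y :: real ^ 'm. int_vec (y v* A) \<and> \<not> p_adic_rat p (y \<bullet> b))"
proof -
  interpret real_subring "{r. p_adic_rat p r}"
    using assms(3) by (simp add: real_subring_p_adic_rat prime_gt_0_nat)
  have "\<forall>i. b $ i \<in> {r. p_adic_rat p r}"
    using assms(2) Ints_mem by (simp add: int_vec_def)
  then have "(\<exists>x. p_adic_vec p x \<and> A *v x = b) \<or>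
      (\<exists>y. int_vec (y v* A) \<and> \<not> p_adic_rat p (y \<bullet> b))"
    using solvable_or_certificate[OF p_adic_rats_ne_UNIV finite[of UNIV] assms(1)]
    by (simp add: p_adic_vec_def)
  moreover have "\<not> ((\<exists>x. p_adic_vec p x \<and> A *v x = b) \<and>
      (\<exists>y. int_vec (y v* A) \<and> \<not> p_adic_rat p (y \<bullet> b)))"
    using certificate_excludes_solution by (auto simp: p_adic_vec_def)
  ultimately show ?thesis by blast
qed

end
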